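(* Let $X$ be a set, $B\subseteq\mathbb{R}^X$ an $\mathbb{R}$-subalgebra and $Q\subseteq B$ a quadratic module with $K_{Q,X}=X$ and $\overline{m(X)}=K_{Q,Y_B}$. Let $f\in\mathbb{R}^X$ and $A=B[f]\subseteq\mathbb{R}^X$. In each of the following cases, $K_{Q',X}=X$ and $\overline{m(X)}=K_{Q',Y_A}$: (1) $f=\sqrt[r]{g}$ (pointwise real $r$-th root) with $r$ odd and $g\in B$, and $Q'$ is the quadratic module of $A$ generated by $Q$; (2) $f=\sqrt[s]{g}$ (pointwise nonnegative $s$-th root) with $s$ even, $g\in B$, $g\ge0$ on $X$, and $Q'$ is the quadratic module of $A$ generated by $Q$ and $f$; (3) $f=\frac1g$ with $g\in B$, $g(x)\ne0$ for all $x\in X$, and $Q'$ is the quadratic module of $A$ generated by $Q$; (4) $f=g\cdot\chi_{\{q\ge0\}}+h\cdot\chi_{\{q<0\}}$ for some $g,h,q\in B$ such that for $y\in K_{Q,Y_B}$, $\hat q(y)=0$ implies $\hat g(y)=\hat h(y)$, and $Q'$ is the quadratic module of $A$ generated by $Q$ and $-q(f-g)^2$, $q(f-h)^2$; (5) $f=\chi_{\{q\ge0\}}$ for some $q\in B$ satisfying $\{y\in K_{Q,Y_B}\mid\hat q(y)=0\}\subseteq\overline{\{y\in K_{Q,Y_B}\mid\hat q(y)>0\}}\cap\overline{\{y\in K_{Q,Y_B}\mid\hat q(y)<0\}}$, and $Q'$ is the quadratic module of $A$ generated by $Q$ and $qf$, $q(f-1)$.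
   Context: A quadratic module of a commutative unital $\mathbb{R}$-algebra $C$ is a subset $Q\subseteq C$ with $Q+Q\subseteq Q$, $c^2Q\subseteq Q$ for all $c\in C$, and $1\in Q$. For an $\mathbb{R}$-subalgebra $C\subseteq\mathbb{R}^X$ and a quadratic module $Q$ of $C$: $K_{Q,X}:=\{x\in X\mid g(x)\ge0\ \forall g\in Q\}$; $Y_C$ is the set of unital $\mathbb{R}$-algebra homomorphisms $C\to\mathbb{R}$; for $c\in C$, $\hat c\colon Y_C\to\mathbb{R}$, $\hat c(y)=y(c)$; $Y_C$ has the weakest topology making all $\hat c$ continuous; $K_{Q,Y_C}:=\{y\in Y_C\mid \hat g(y)\ge0\ \forall g\in Q\}$; $m\colon X\to Y_C$, $m(x)(c)=c(x)$. Overlines on subsets of $Y_C$ denote closure in $Y_C$. $\chi_S$ denotes the characteristic function of $S\subseteq X$, and $\{q\ge0\}=\{x\in X\mid q(x)\ge0\}$, etc. *)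

theory Defs
  imports "HOL-Analysis.Analysis"
begin

text \<open>The set X is modelled as the universe of a type 'a; elements of R^X are
functions 'a \<Rightarrow> real.\<close>

definition is_subalgebra :: "('a \<Rightarrow> real) set \<Rightarrow> bool" where
  "is_subalgebra C \<longleftrightarrow>
     (\<forall>c::real. (\<lambda>_. c) \<in> C) \<and>
     (\<forall>f\<in>C. \<forall>g\<in>C. (\<lambda>x. f x + g x) \<in> C \<and> (\<lambda>x. f x * g x) \<in> C)"

definition adjoin :: "('a \<Rightarrow> real) set \<Rightarrow> ('a \<Rightarrow> real) \<Rightarrow> ('a \<Rightarrow> real) set" where
  "adjoin B f = \<Inter> {A. is_subalgebra A \<and> B \<subseteq> A \<and> f \<in> A}"

definition is_quadmod :: "('a \<Rightarrow> real) set \<Rightarrow> ('a \<Rightarrow> real) set \<Rightarrow> bool" where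
  "is_quadmod C Q \<longleftrightarrow> Q \<subseteq> C \<and>
     (\<forall>p\<in>Q. \<forall>q\<in>Q. (\<lambda>x. p x + q x) \<in> Q) \<and>
     (\<forall>c\<in>C. \<forall>p\<in>Q. (\<lambda>x. (c x)\<^sup>2 * p x) \<in> Q) \<and>
     (\<lambda>_. 1) \<in> Q"

definition qm_gen :: "('a \<Rightarrow> real) set \<Rightarrow> ('a \<Rightarrow> real) set \<Rightarrow> ('a \<Rightarrow> real) set" where
  "qm_gen C S = \<Inter> {Q. is_quadmod C Q \<and> S \<subseteq> Q}"

definition KX :: "('a \<Rightarrow> real) set \<Rightarrow> 'a set" where
  "KX Q = {x. \<forall>g\<in>Q. g x \<ge> 0}"

text \<open>Y_C: unital R-algebra homomorphisms C \<rightarrow> R, represented as functions on C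
(extensional: undefined outside C).\<close>
definition Ychar :: "('a \<Rightarrow> real) set \<Rightarrow> (('a \<Rightarrow> real) \<Rightarrow> real) set" where
  "Ychar C = {y \<in> extensional C.
      (\<forall>f\<in>C. \<forall>g\<in>C. y (\<lambda>x. f x + g x) = y f + y g \<and> y (\<lambda>x. f x * g x) = y f * y g) \<and>
      (\<forall>c::real. \<forall>f\<in>C. y (\<lambda>x. c * f x) = c * y f) \<and>
      y (\<lambda>_. 1) = 1}"

text \<open>The weakest topology on Y_C making all evaluation maps continuous, i.e. the
subspace topology of the product topology on R^C.\<close>
definition Ytop :: "('a \<Rightarrow> real) set \<Rightarrow> (('a \<Rightarrow> real) \<Rightarrow> real) topology" where
  "Ytop C = subtopology (product_topology (\<lambda>_. euclideanreal) C) (Ychar C)"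

definition mmap :: "('a \<Rightarrow> real) set \<Rightarrow> 'a \<Rightarrow> (('a \<Rightarrow> real) \<Rightarrow> real)" where
  "mmap C x = restrict (\<lambda>c. c x) C"

definition KY :: "('a \<Rightarrow> real) set \<Rightarrow> ('a \<Rightarrow> real) set \<Rightarrow> (('a \<Rightarrow> real) \<Rightarrow> real) set" where
  "KY C Q = {y \<in> Ychar C. \<forall>g\<in>Q. y g \<ge> 0}"

definition good :: "('a \<Rightarrow> real) set \<Rightarrow> ('a \<Rightarrow> real) set \<Rightarrow> bool" where
  "good C Q \<longleftrightarrow> KX Q = UNIV \<and> (Ytop C) closure_of (mmap C ` UNIV) = KY C Q"

end

theory Submission
  imports Defs
begin

text \<open>A character \<open>y\<close> of a function algebra lies in the closure of the point evaluations iff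
its values on any finitely many elements can be matched up to \<open>\<epsilon>\<close> by a single point. For
\<open>A = B[f]\<close> it suffices to match finitely many elements of \<open>B\<close> together with \<open>f\<close>, because the
functions whose values at the approximating points converge to their \<open>y\<close>-values form a
subalgebra. If \<open>y \<in> K\<^bsub>Q',Y\<^sub>A\<^esub>\<close>, the restriction of \<open>y\<close> to \<open>B\<close> lies in \<open>K\<^bsub>Q,Y\<^sub>B\<^esub>\<close>, the closure of the
point evaluations of \<open>B\<close>, so \<open>y\<close> is approximable on \<open>B\<close>; the generators of \<open>Q'\<close> pin down
\<open>y(f)\<close> so that it is approximated as well. In cases (1)--(3) \<open>y(f)\<close> is a continuous function of
\<open>y(g)\<close>; in cases (4) and (5) the sign of \<open>y(q)\<close>, or the closure hypothesis when \<open>y(q) = 0\<close>,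
provides approximating points in the region where \<open>f\<close> agrees with the branch selected by \<open>y\<close>.\<close>

lemma subalgebra_const: "is_subalgebra C \<Longrightarrow> (\<lambda>_. c) \<in> C"
  by (simp add: is_subalgebra_def)

lemma subalgebra_add: "is_subalgebra C \<Longrightarrow> a \<in> C \<Longrightarrow> b \<in> C \<Longrightarrow> (\<lambda>x. a x + b x) \<in> C"
  by (simp add: is_subalgebra_def)

lemma subalgebra_mult: "is_subalgebra C \<Longrightarrow> a \<in> C \<Longrightarrow> b \<in> C \<Longrightarrow> (\<lambda>x. a x * b x) \<in> C"
  by (simp add: is_subalgebra_def)

lemma subalgebra_scaleR: "is_subalgebra C \<Longrightarrow> a \<in> C \<Longrightarrow> (\<lambda>x. c * a x) \<in> C"
  using subalgebra_mult[of C "\<lambda>_. c" a] subalgebra_const by auto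

lemma subalgebra_minus: "is_subalgebra C \<Longrightarrow> a \<in> C \<Longrightarrow> (\<lambda>x. - a x) \<in> C"
  using subalgebra_scaleR[of C a "-1"] by simp

lemma subalgebra_diff: "is_subalgebra C \<Longrightarrow> a \<in> C \<Longrightarrow> b \<in> C \<Longrightarrow> (\<lambda>x. a x - b x) \<in> C"
  using subalgebra_add[of C a "\<lambda>x. - b x"] subalgebra_minus[of C b] by simp

lemma subalgebra_power: "is_subalgebra C \<Longrightarrow> a \<in> C \<Longrightarrow> (\<lambda>x. a x ^ n) \<in> C"
  by (induction n) (auto simp: subalgebra_const subalgebra_mult)

lemmas subalgebra_closed = subalgebra_const subalgebra_add subalgebra_mult subalgebra_scaleR
  subalgebra_minus subalgebra_diff subalgebra_power

lemma Ychar_add: "y \<in> Ychar C \<Longrightarrow> a \<in> C \<Longrightarrow> b \<in> C \<Longrightarrow> y (\<lambda>x. a x + b x) = y a + y b"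
  by (simp add: Ychar_def)

lemma Ychar_mult: "y \<in> Ychar C \<Longrightarrow> a \<in> C \<Longrightarrow> b \<in> C \<Longrightarrow> y (\<lambda>x. a x * b x) = y a * y b"
  by (simp add: Ychar_def)

lemma Ychar_scaleR: "y \<in> Ychar C \<Longrightarrow> a \<in> C \<Longrightarrow> y (\<lambda>x. c * a x) = c * y a"
  by (simp add: Ychar_def)

lemma Ychar_const:
  assumes "is_subalgebra C" "y \<in> Ychar C"
  shows "y (\<lambda>_. c) = c"
  using Ychar_scaleR[OF assms(2) subalgebra_const[OF assms(1)], of c 1] assms(2)
  by (simp add: Ychar_def)

lemma Ychar_minus: "y \<in> Ychar C \<Longrightarrow> a \<in> C \<Longrightarrow> y (\<lambda>x. - a x) = - y a"
  using Ychar_scaleR[of y C a "-1"] by simp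

lemma Ychar_diff:
  "is_subalgebra C \<Longrightarrow> y \<in> Ychar C \<Longrightarrow> a \<in> C \<Longrightarrow> b \<in> C \<Longrightarrow> y (\<lambda>x. a x - b x) = y a - y b"
  using Ychar_add[of y C a "\<lambda>x. - b x"] Ychar_minus[of y C b] subalgebra_minus[of C b] by simp

lemma Ychar_power:
  "is_subalgebra C \<Longrightarrow> y \<in> Ychar C \<Longrightarrow> a \<in> C \<Longrightarrow> y (\<lambda>x. a x ^ n) = y a ^ n"
  by (induction n) (simp_all add: Ychar_const Ychar_mult[of y C a] subalgebra_power)

lemma Ychar_restrict:
  assumes B: "is_subalgebra B" and BA: "B \<subseteq> A" and y: "y \<in> Ychar A"
  shows "restrict y B \<in> Ychar B"
  using y BA subalgebra_add[OF B] subalgebra_mult[OF B] subalgebra_scaleR[OF B] subalgebra_const[OF B]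
  unfolding Ychar_def by (auto simp: subset_iff)

lemma mmap_in_Ychar: "is_subalgebra C \<Longrightarrow> mmap C x \<in> Ychar C"
  unfolding Ychar_def mmap_def by (auto simp: subalgebra_closed)

lemma adjoin_subalgebra: "is_subalgebra (adjoin B f)"
  unfolding adjoin_def is_subalgebra_def by blast

lemma subset_adjoin: "B \<subseteq> adjoin B f"
  unfolding adjoin_def by blast

lemma in_adjoin: "f \<in> adjoin B f"
  unfolding adjoin_def by blast

lemma adjoin_least: "is_subalgebra G \<Longrightarrow> B \<subseteq> G \<Longrightarrow> f \<in> G \<Longrightarrow> adjoin B f \<subseteq> G"
  unfolding adjoin_def by blast

lemma subset_qm_gen: "S \<subseteq> qm_gen C S"
  unfolding qm_gen_def by blast

lemma qm_gen_least: "is_quadmod C P \<Longrightarrow> S \<subseteq> P \<Longrightarrow> qm_gen C S \<subseteq> P"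
  unfolding qm_gen_def by blast

lemma quadmod_nonneg: "is_subalgebra C \<Longrightarrow> is_quadmod C {a \<in> C. \<forall>x. 0 \<le> a x}"
  unfolding is_quadmod_def by (auto simp: subalgebra_closed)

lemma KY_qm_gen_nonneg: "y \<in> KY A (qm_gen A S) \<Longrightarrow> s \<in> S \<Longrightarrow> 0 \<le> y s"
  using subset_qm_gen[of S A] by (auto simp: KY_def)

lemma KY_restrict:
  assumes "is_subalgebra B" "B \<subseteq> A" "y \<in> KY A Q'" "Q \<subseteq> Q'" "Q \<subseteq> B"
  shows "restrict y B \<in> KY B Q"
  using assms Ychar_restrict[of B A y] by (auto simp: KY_def)

lemma good_nonneg: "good B Q \<Longrightarrow> g \<in> Q \<Longrightarrow> 0 \<le> g x"
  unfolding good_def KX_def by blast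

lemma topspace_Ytop: "topspace (Ytop C) = Ychar C"
  unfolding Ytop_def by (auto simp: Ychar_def PiE_def)

lemma continuous_map_Ytop_eval: "c \<in> C \<Longrightarrow> continuous_map (Ytop C) euclideanreal (\<lambda>y. y c)"
  unfolding Ytop_def
  by (intro continuous_map_from_subtopology continuous_map_product_projection)

lemma openin_Ytop_eval:
  "c \<in> C \<Longrightarrow> open U \<Longrightarrow> openin (Ytop C) {y \<in> Ychar C. y c \<in> U}"
  using openin_continuous_map_preimage[OF continuous_map_Ytop_eval] by (force simp: topspace_Ytop)

lemma closedin_KY:
  assumes "Q \<subseteq> C"
  shows "closedin (Ytop C) (KY C Q)"
proof -
  have closed_half: "closedin (Ytop C) {y \<in> topspace (Ytop C). y g \<in> {0..}}" if "g \<in> Q" for g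
    using that assms by (intro closedin_continuous_map_preimage[OF continuous_map_Ytop_eval]) auto
  have "KY C Q = \<Inter> (insert (topspace (Ytop C)) ((\<lambda>g. {y \<in> topspace (Ytop C). y g \<in> {0..}}) ` Q))"
    by (auto simp: topspace_Ytop KY_def)
  also have "closedin (Ytop C) \<dots>"
    using closed_half by (intro closedin_Inter) auto
  finally show ?thesis .
qed

definition approximable_on :: "('a \<Rightarrow> real) set \<Rightarrow> 'a set \<Rightarrow> (('a \<Rightarrow> real) \<Rightarrow> real) \<Rightarrow> bool" where
  "approximable_on C P y \<longleftrightarrow>
     (\<forall>F \<epsilon>. finite F \<longrightarrow> F \<subseteq> C \<longrightarrow> 0 < \<epsilon> \<longrightarrow> (\<exists>x\<in>P. \<forall>c\<in>F. \<bar>c x - y c\<bar> < \<epsilon>))"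

abbreviation approximable :: "('a \<Rightarrow> real) set \<Rightarrow> (('a \<Rightarrow> real) \<Rightarrow> real) \<Rightarrow> bool" where
  "approximable C \<equiv> approximable_on C UNIV"

lemma approximable_on_restrict [simp]: "approximable_on C P (restrict y C) \<longleftrightarrow> approximable_on C P y"
proof -
  have "(\<forall>c\<in>F. \<bar>c x - restrict y C c\<bar> < \<epsilon>) \<longleftrightarrow> (\<forall>c\<in>F. \<bar>c x - y c\<bar> < \<epsilon>)" if "F \<subseteq> C" for F x \<epsilon>
    using that by auto
  then show ?thesis unfolding approximable_on_def by meson
qed

lemma closure_of_mmap_imp_approximable_on:
  assumes y: "y \<in> Ytop C closure_of (mmap C ` P)"
  shows "approximable_on C P y"
  unfolding approximable_on_def
proof (intro allI impI)
  fix F and \<epsilon> :: real assume F: "finite F" "F \<subseteq> C" and "0 < \<epsilon>"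
  define N where "N = (\<Inter>c\<in>F. {w \<in> Ychar C. w c \<in> ball (y c) \<epsilon>}) \<inter> topspace (Ytop C)"
  have "openin (Ytop C) N"
    unfolding N_def using F by (intro openin_INT openin_Ytop_eval) auto
  moreover have "y \<in> N"
    using y \<open>0 < \<epsilon>\<close> closure_of_subset_topspace by (fastforce simp: N_def topspace_Ytop)
  ultimately obtain x where "x \<in> P" "mmap C x \<in> N"
    using y unfolding in_closure_of by blast
  then show "\<exists>x\<in>P. \<forall>c\<in>F. \<bar>c x - y c\<bar> < \<epsilon>"
    using F(2) by (auto simp: N_def mmap_def dist_real_def abs_minus_commute subset_iff)
qed

lemma good_imp_approximable: "good B Q \<Longrightarrow> restrict y B \<in> KY B Q \<Longrightarrow> approximable B y"
  using closure_of_mmap_imp_approximable_on[of "restrict y B" B UNIV] by (simp add: good_def)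

lemma approximable_imp_convergent_filter:
  assumes "approximable C y"
  obtains Fy where "Fy \<noteq> bot" "\<And>c. c \<in> C \<Longrightarrow> (c \<longlongrightarrow> y c) Fy"
proof -
  define I where "I = {(F, \<delta>::real). finite F \<and> F \<subseteq> C \<and> 0 < \<delta>}"
  define S where "S = (\<lambda>(F, \<delta>). {x. \<forall>c\<in>F. \<bar>c x - y c\<bar> < \<delta>})"
  define Fy where "Fy = (INF i\<in>I. principal (S i))"
  have eventually_Fy: "eventually P Fy \<longleftrightarrow> (\<exists>i\<in>I. \<forall>x\<in>S i. P x)" for P
    unfolding Fy_def
  proof (subst eventually_INF_base)
    show "I \<noteq> {}"
    proof -
      have "({}, 1) \<in> I"
        by (simp add: I_def)
      then show ?thesis by blast
    qed
    show "\<exists>k\<in>I. principal (S k) \<le> inf (principal (S i)) (principal (S j))" if "i \<in> I" "j \<in> I" for i j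
    proof -
      obtain F1 \<delta>1 F2 \<delta>2 where "i = (F1, \<delta>1)" "j = (F2, \<delta>2)"
        by fastforce
      with that show ?thesis
        unfolding I_def S_def by (intro bexI[of _ "(F1 \<union> F2, min \<delta>1 \<delta>2)"]) auto
    qed
  qed (simp add: eventually_principal)
  show thesis
  proof
    show "Fy \<noteq> bot"
    proof
      assume "Fy = bot"
      then have "eventually (\<lambda>_. False) Fy"
        by simp
      then obtain F \<delta> where "finite F" "F \<subseteq> C" "0 < \<delta>" "S (F, \<delta>) = {}"
        unfolding eventually_Fy I_def by auto
      moreover from calculation have "\<exists>x. \<forall>c\<in>F. \<bar>c x - y c\<bar> < \<delta>"
        using assms unfolding approximable_on_def by blast
      ultimately show False
        by (auto simp: S_def)
    qed
    show "(c \<longlongrightarrow> y c) Fy" if "c \<in> C" for c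
    proof (rule tendstoI)
      fix \<epsilon> :: real assume "0 < \<epsilon>"
      then show "eventually (\<lambda>x. dist (c x) (y c) < \<epsilon>) Fy"
        using that unfolding eventually_Fy
        by (intro bexI[of _ "({c}, \<epsilon>)"]) (auto simp: I_def S_def dist_real_def)
    qed
  qed
qed

lemma subalgebra_convergent:
  assumes "is_subalgebra A" "y \<in> Ychar A"
  shows "is_subalgebra {a \<in> A. (a \<longlongrightarrow> y a) Fy}"
  unfolding is_subalgebra_def
proof (intro conjI ballI allI; clarsimp)
  show "(\<lambda>_. c) \<in> A \<and> ((\<lambda>_. c) \<longlongrightarrow> y (\<lambda>_. c)) Fy" for c
    using assms by (simp add: subalgebra_const Ychar_const)
  fix a b assume "a \<in> A" "(a \<longlongrightarrow> y a) Fy" "b \<in> A" "(b \<longlongrightarrow> y b) Fy"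
  then show "(\<lambda>x. a x + b x) \<in> A \<and> ((\<lambda>x. a x + b x) \<longlongrightarrow> y (\<lambda>x. a x + b x)) Fy"
    and "(\<lambda>x. a x * b x) \<in> A \<and> ((\<lambda>x. a x * b x) \<longlongrightarrow> y (\<lambda>x. a x * b x)) Fy"
    using assms by (simp_all add: subalgebra_add subalgebra_mult Ychar_add Ychar_mult tendsto_add tendsto_mult)
qed

text \<open>A basic open neighbourhood of \<open>y\<close> constrains only finitely many coordinates, and along
\<open>Fy\<close> the point evaluations eventually satisfy each of these constraints.\<close>

lemma convergent_filter_imp_in_closure:
  assumes C: "is_subalgebra C" and y: "y \<in> Ychar C" and Fy: "Fy \<noteq> bot"
    and lim: "\<And>c. c \<in> C \<Longrightarrow> (c \<longlongrightarrow> y c) Fy"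
  shows "y \<in> Ytop C closure_of (mmap C ` UNIV)"
  unfolding in_closure_of
proof (intro conjI allI impI)
  show "y \<in> topspace (Ytop C)"
    using y by (simp add: topspace_Ytop)
  fix T assume T: "y \<in> T \<and> openin (Ytop C) T"
  then obtain U where U: "openin (product_topology (\<lambda>_. euclideanreal) C) U" "T = U \<inter> Ychar C"
    unfolding Ytop_def openin_subtopology by auto
  then have "y \<in> U"
    using T by auto
  then obtain V where V: "finite {c \<in> C. V c \<noteq> UNIV}" "\<forall>c\<in>C. open (V c)" "y \<in> Pi\<^sub>E C V"
      "Pi\<^sub>E C V \<subseteq> U"
    using U(1) unfolding openin_product_topology_alt by auto
  have "eventually (\<lambda>x. c x \<in> V c) Fy" if "c \<in> {c \<in> C. V c \<noteq> UNIV}" for c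
  proof -
    have "c \<in> C" "open (V c)" "y c \<in> V c"
      using that V by (auto simp: PiE_iff)
    then show ?thesis
      using lim topological_tendstoD by blast
  qed
  then have "eventually (\<lambda>x. \<forall>c\<in>{c \<in> C. V c \<noteq> UNIV}. c x \<in> V c) Fy"
    using V(1) by (intro eventually_ball_finite) auto
  then obtain x where "\<forall>c\<in>{c \<in> C. V c \<noteq> UNIV}. c x \<in> V c"
    using eventually_happens'[OF Fy] by blast
  then have "mmap C x \<in> Pi\<^sub>E C V"
    by (auto simp: mmap_def PiE_iff)
  then have "mmap C x \<in> T"
    using V(4) U(2) mmap_in_Ychar[OF C] by auto
  then show "\<exists>z. z \<in> mmap C ` UNIV \<and> z \<in> T"
    by blast
qed

lemma approximable_adjoin_imp_in_closure:
  assumes y: "y \<in> Ychar (adjoin B f)" and approx: "approximable (insert f B) y"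
  shows "y \<in> Ytop (adjoin B f) closure_of (mmap (adjoin B f) ` UNIV)"
proof -
  obtain Fy where Fy: "Fy \<noteq> bot" and lim: "\<And>c. c \<in> insert f B \<Longrightarrow> (c \<longlongrightarrow> y c) Fy"
    using approximable_imp_convergent_filter[OF approx] by blast
  have "adjoin B f \<subseteq> {a \<in> adjoin B f. (a \<longlongrightarrow> y a) Fy}"
    using lim subset_adjoin in_adjoin
    by (intro adjoin_least subalgebra_convergent[OF adjoin_subalgebra y]) auto
  then show ?thesis
    using Fy by (intro convergent_filter_imp_in_closure[OF adjoin_subalgebra y]) auto
qed

lemma good_adjoinI:
  assumes B: "is_subalgebra B" and Q: "is_quadmod B Q" and good: "good B Q"
    and S: "S \<subseteq> adjoin B f" "Q \<subseteq> S" and S_nonneg: "\<And>s x. s \<in> S \<Longrightarrow> 0 \<le> s x"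
    and approx: "\<And>y. y \<in> KY (adjoin B f) (qm_gen (adjoin B f) S) \<Longrightarrow> restrict y B \<in> KY B Q \<Longrightarrow>
        approximable (insert f B) y"
  shows "good (adjoin B f) (qm_gen (adjoin B f) S)"
proof -
  let ?A = "adjoin B f" and ?Q' = "qm_gen (adjoin B f) S"
  have Q'_nonneg: "?Q' \<subseteq> {a \<in> ?A. \<forall>x. 0 \<le> a x}"
    using S S_nonneg by (intro qm_gen_least quadmod_nonneg adjoin_subalgebra) auto
  have "Ytop ?A closure_of (mmap ?A ` UNIV) \<subseteq> KY ?A ?Q'"
  proof (rule closure_of_minimal)
    show "mmap ?A ` UNIV \<subseteq> KY ?A ?Q'"
      using Q'_nonneg mmap_in_Ychar[OF adjoin_subalgebra] by (auto simp: KY_def mmap_def)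
    show "closedin (Ytop ?A) (KY ?A ?Q')"
      using Q'_nonneg by (intro closedin_KY) auto
  qed
  moreover have "KY ?A ?Q' \<subseteq> Ytop ?A closure_of (mmap ?A ` UNIV)"
  proof
    fix y assume y: "y \<in> KY ?A ?Q'"
    show "y \<in> Ytop ?A closure_of (mmap ?A ` UNIV)"
    proof (rule approximable_adjoin_imp_in_closure)
      show "y \<in> Ychar ?A"
        using y by (simp add: KY_def)
      have "Q \<subseteq> B"
        using Q by (simp add: is_quadmod_def)
      then show "approximable (insert f B) y"
        using S(2) subset_qm_gen[of S ?A] by (intro approx y KY_restrict[OF B subset_adjoin y]) auto
    qed
  qed
  moreover have "KX ?Q' = UNIV"
    using Q'_nonneg by (auto simp: KX_def)
  ultimately show ?thesis
    unfolding good_def by (simp add: subset_antisym)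
qed

lemma approximable_insert_comp:
  assumes approx: "approximable B y" and g: "g \<in> B" and f: "f = (\<lambda>x. \<phi> (g x))"
    and yf: "y f = \<phi> (y g)" and cont: "isCont \<phi> (y g)"
  shows "approximable (insert f B) y"
  unfolding approximable_on_def
proof (intro allI impI)
  fix F and \<epsilon> :: real assume F: "finite F" "F \<subseteq> insert f B" and "0 < \<epsilon>"
  obtain \<delta> where "0 < \<delta>" and \<delta>: "\<And>t. dist t (y g) < \<delta> \<Longrightarrow> dist (\<phi> t) (\<phi> (y g)) < \<epsilon>"
    using cont \<open>0 < \<epsilon>\<close> unfolding continuous_at_eps_delta by blast
  have "finite (insert g (F - {f}))" "insert g (F - {f}) \<subseteq> B" "0 < min \<epsilon> \<delta>"
    using F g \<open>0 < \<epsilon>\<close> \<open>0 < \<delta>\<close> by auto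
  from approx[unfolded approximable_on_def, rule_format, OF this]
  obtain x where x: "\<forall>c\<in>insert g (F - {f}). \<bar>c x - y c\<bar> < min \<epsilon> \<delta>" by blast
  then have "\<bar>f x - y f\<bar> < \<epsilon>"
    using \<delta>[of "g x"] f yf by (simp add: dist_real_def)
  with x show "\<exists>x\<in>UNIV. \<forall>c\<in>F. \<bar>c x - y c\<bar> < \<epsilon>"
    by auto
qed

lemma approximable_insert_pointwise:
  assumes approx: "approximable_on B P y" and G: "finite G" "G \<subseteq> B"
    and agree: "\<And>x. x \<in> P \<Longrightarrow> \<exists>g\<in>G. f x = g x" and yG: "\<And>g. g \<in> G \<Longrightarrow> y g = y f"
  shows "approximable (insert f B) y"
  unfolding approximable_on_def
proof (intro allI impI)
  fix F and \<epsilon> :: real assume F: "finite F" "F \<subseteq> insert f B" and "0 < \<epsilon>"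
  have "finite (G \<union> (F - {f}))" "G \<union> (F - {f}) \<subseteq> B"
    using F G by auto
  from approx[unfolded approximable_on_def, rule_format, OF this \<open>0 < \<epsilon>\<close>]
  obtain x where "x \<in> P" and x: "\<forall>c\<in>G \<union> (F - {f}). \<bar>c x - y c\<bar> < \<epsilon>" ..
  obtain g where "g \<in> G" "f x = g x"
    using agree[OF \<open>x \<in> P\<close>] by blast
  moreover have "\<bar>g x - y g\<bar> < \<epsilon>"
    using x \<open>g \<in> G\<close> by blast
  ultimately have "\<bar>f x - y f\<bar> < \<epsilon>"
    using yG by simp
  with x show "\<exists>x\<in>UNIV. \<forall>c\<in>F. \<bar>c x - y c\<bar> < \<epsilon>"
    by auto
qed

text \<open>The evaluation at \<open>q\<close> is continuous, so near a character with \<open>q\<close>-value in the open set \<open>U\<close>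
the point evaluations approximating it can be taken from \<open>{q \<in> U}\<close>.\<close>

lemma good_approximable_on_preimage:
  assumes good: "good B Q" and q: "q \<in> B" and U: "open U"
    and z: "z \<in> Ytop B closure_of {w \<in> KY B Q. w q \<in> U}"
  shows "approximable_on B {x. q x \<in> U} z"
proof (rule closure_of_mmap_imp_approximable_on)
  have opn: "openin (Ytop B) {w \<in> Ychar B. w q \<in> U}"
    by (rule openin_Ytop_eval[OF q U])
  have "{w \<in> KY B Q. w q \<in> U} \<subseteq> {w \<in> Ychar B. w q \<in> U} \<inter> Ytop B closure_of (mmap B ` UNIV)"
    using good by (auto simp: good_def KY_def)
  also have "\<dots> \<subseteq> Ytop B closure_of ({w \<in> Ychar B. w q \<in> U} \<inter> mmap B ` UNIV)"
    by (rule openin_Int_closure_of_subset[OF opn])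
  also have "\<dots> \<subseteq> Ytop B closure_of (mmap B ` {x. q x \<in> U})"
  proof (intro closure_of_mono subsetI)
    fix w assume "w \<in> {w \<in> Ychar B. w q \<in> U} \<inter> range (mmap B)"
    then obtain x where "w = mmap B x" "mmap B x q \<in> U"
      by blast
    then show "w \<in> mmap B ` {x. q x \<in> U}"
      using q by (simp add: mmap_def)
  qed
  finally have "Ytop B closure_of {w \<in> KY B Q. w q \<in> U} \<subseteq> Ytop B closure_of (mmap B ` {x. q x \<in> U})"
    by (rule closure_of_minimal) simp
  then show "z \<in> Ytop B closure_of (mmap B ` {x. q x \<in> U})"
    using z by (rule subsetD)
qed

lemma KY_approximable_on_preimage:
  assumes good: "good B Q" and q: "q \<in> B" and U: "open U"
    and y: "restrict y B \<in> KY B Q" "y q \<in> U"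
  shows "approximable_on B {x. q x \<in> U} y"
proof -
  have "restrict y B \<in> {w \<in> KY B Q. w q \<in> U}"
    using y q by simp
  then have "restrict y B \<in> Ytop B closure_of {w \<in> KY B Q. w q \<in> U}"
    using closure_of_subset[of "{w \<in> KY B Q. w q \<in> U}" "Ytop B"] by (auto simp: topspace_Ytop KY_def)
  from good_approximable_on_preimage[OF good q U this] show ?thesis
    by simp
qed

lemma approximable_insert_piecewise:
  assumes good: "good B Q" and B: "g \<in> B" "h \<in> B" "q \<in> B"
    and f: "f = (\<lambda>x. if 0 \<le> q x then g x else h x)" and yB: "restrict y B \<in> KY B Q"
    and pos: "0 < y q \<Longrightarrow> y f = y g" and neg: "y q < 0 \<Longrightarrow> y f = y h"
    and zero: "y q = 0 \<Longrightarrow> approximable (insert f B) y"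
  shows "approximable (insert f B) y"
proof -
  consider "0 < y q" | "y q < 0" | "y q = 0"
    by linarith
  then show ?thesis
  proof cases
    case 1
    then have "approximable_on B {x. q x \<in> {0<..}} y"
      by (intro KY_approximable_on_preimage[OF good B(3) _ yB]) auto
    then show ?thesis
      using B f pos[OF 1] by (intro approximable_insert_pointwise[where G = "{g}"]) auto
  next
    case 2
    then have "approximable_on B {x. q x \<in> {..<0}} y"
      by (intro KY_approximable_on_preimage[OF good B(3) _ yB]) auto
    then show ?thesis
      using B f neg[OF 2] by (intro approximable_insert_pointwise[where G = "{h}"]) auto
  qed (rule zero)
qed

lemma good_adjoin_odd_root:
  assumes B: "is_subalgebra B" and Q: "is_quadmod B Q" and good: "good B Q"
    and r: "odd r" and g: "g \<in> B" and f: "f = (\<lambda>x. root r (g x))"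
  shows "good (adjoin B f) (qm_gen (adjoin B f) Q)"
proof (rule good_adjoinI[OF B Q good])
  show "Q \<subseteq> adjoin B f"
    using Q subset_adjoin by (fastforce simp: is_quadmod_def)
  show "0 \<le> s x" if "s \<in> Q" for s x
    using good_nonneg[OF good that] .
  fix y assume y: "y \<in> KY (adjoin B f) (qm_gen (adjoin B f) Q)" and yB: "restrict y B \<in> KY B Q"
  have "(\<lambda>x. f x ^ r) = g"
    using f r by (simp add: odd_real_root_pow)
  then have "y g = y f ^ r"
    using y Ychar_power[OF adjoin_subalgebra _ in_adjoin, of y B f r] by (simp add: KY_def)
  then have "y f = root r (y g)"
    using r by (simp add: odd_real_root_power_cancel)
  then show "approximable (insert f B) y"
    using good_imp_approximable[OF good yB] g f isCont_real_root by (intro approximable_insert_comp) auto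
qed simp

lemma good_adjoin_even_root:
  assumes B: "is_subalgebra B" and Q: "is_quadmod B Q" and good: "good B Q"
    and s: "0 < s" and g: "g \<in> B" and g_nonneg: "\<And>x. 0 \<le> g x" and f: "f = (\<lambda>x. root s (g x))"
  shows "good (adjoin B f) (qm_gen (adjoin B f) (Q \<union> {f}))"
proof (rule good_adjoinI[OF B Q good])
  show "Q \<union> {f} \<subseteq> adjoin B f"
    using Q subset_adjoin in_adjoin by (fastforce simp: is_quadmod_def)
  show "0 \<le> p x" if "p \<in> Q \<union> {f}" for p x
    using that good_nonneg[OF good] g_nonneg f by (auto intro: real_root_ge_zero)
  fix y assume y: "y \<in> KY (adjoin B f) (qm_gen (adjoin B f) (Q \<union> {f}))"
    and yB: "restrict y B \<in> KY B Q"
  have "(\<lambda>x. f x ^ s) = g"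
    using f s g_nonneg by simp
  then have "y g = y f ^ s"
    using y Ychar_power[OF adjoin_subalgebra _ in_adjoin, of y B f s] by (simp add: KY_def)
  moreover have "0 \<le> y f"
    using KY_qm_gen_nonneg[OF y] by simp
  ultimately have "y f = root s (y g)"
    using s by (simp add: real_root_power_cancel)
  then show "approximable (insert f B) y"
    using good_imp_approximable[OF good yB] g f isCont_real_root by (intro approximable_insert_comp) auto
qed auto

lemma good_adjoin_inverse:
  assumes B: "is_subalgebra B" and Q: "is_quadmod B Q" and good: "good B Q"
    and g: "g \<in> B" and g_nonzero: "\<And>x. g x \<noteq> 0" and f: "f = (\<lambda>x. 1 / g x)"
  shows "good (adjoin B f) (qm_gen (adjoin B f) Q)"
proof (rule good_adjoinI[OF B Q good])
  show "Q \<subseteq> adjoin B f"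
    using Q subset_adjoin by (fastforce simp: is_quadmod_def)
  show "0 \<le> s x" if "s \<in> Q" for s x
    using good_nonneg[OF good that] .
  fix y assume y: "y \<in> KY (adjoin B f) (qm_gen (adjoin B f) Q)" and yB: "restrict y B \<in> KY B Q"
  have yA: "y \<in> Ychar (adjoin B f)"
    using y by (simp add: KY_def)
  have "(\<lambda>x. f x * g x) = (\<lambda>_. 1)"
    using f g_nonzero by simp
  then have "y f * y g = 1"
    using Ychar_mult[OF yA in_adjoin, of g] Ychar_const[OF adjoin_subalgebra yA, of 1] g subset_adjoin
    by auto
  then have "y g \<noteq> 0" "y f = 1 / y g"
    by (auto simp: eq_divide_eq)
  moreover from \<open>y g \<noteq> 0\<close> have "isCont (\<lambda>t. 1 / t) (y g)"
    by (intro continuous_intros) auto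
  ultimately show "approximable (insert f B) y"
    using good_imp_approximable[OF good yB] g f by (intro approximable_insert_comp) auto
qed simp

lemma good_adjoin_piecewise:
  assumes B: "is_subalgebra B" and Q: "is_quadmod B Q" and good: "good B Q"
    and g: "g \<in> B" and h: "h \<in> B" and q: "q \<in> B"
    and f: "f = (\<lambda>x. if q x \<ge> 0 then g x else h x)"
    and agree: "\<And>y. y \<in> KY B Q \<Longrightarrow> y q = 0 \<Longrightarrow> y g = y h"
  shows "good (adjoin B f) (qm_gen (adjoin B f)
           (Q \<union> {\<lambda>x. - (q x * (f x - g x)\<^sup>2), \<lambda>x. q x * (f x - h x)\<^sup>2}))"
proof (rule good_adjoinI[OF B Q good])
  have A: "f \<in> adjoin B f" "g \<in> adjoin B f" "h \<in> adjoin B f" "q \<in> adjoin B f"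
    using g h q in_adjoin subset_adjoin[of B f] by auto
  note closed = subalgebra_closed[OF adjoin_subalgebra]
  show "Q \<union> {\<lambda>x. - (q x * (f x - g x)\<^sup>2), \<lambda>x. q x * (f x - h x)\<^sup>2} \<subseteq> adjoin B f"
    using Q subset_adjoin A by (fastforce simp: is_quadmod_def closed)
  show "0 \<le> p x" if "p \<in> Q \<union> {\<lambda>x. - (q x * (f x - g x)\<^sup>2), \<lambda>x. q x * (f x - h x)\<^sup>2}" for p x
    using that good_nonneg[OF good] f by (auto simp: mult_nonneg_nonpos mult_nonpos_nonneg)
  fix y assume y: "y \<in> KY (adjoin B f) (qm_gen (adjoin B f)
                     (Q \<union> {\<lambda>x. - (q x * (f x - g x)\<^sup>2), \<lambda>x. q x * (f x - h x)\<^sup>2}))"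
    and yB: "restrict y B \<in> KY B Q"
  have yA: "y \<in> Ychar (adjoin B f)"
    using y by (simp add: KY_def)
  note y_hom = Ychar_mult[OF yA] Ychar_minus[OF yA] Ychar_diff[OF adjoin_subalgebra yA]
    Ychar_power[OF adjoin_subalgebra yA] Ychar_const[OF adjoin_subalgebra yA]
  have "0 \<le> y (\<lambda>x. - (q x * (f x - g x)\<^sup>2))"
    by (rule KY_qm_gen_nonneg[OF y]) simp
  then have on_g: "y q * (y f - y g)\<^sup>2 \<le> 0"
    using A by (simp add: y_hom closed)
  have "0 \<le> y (\<lambda>x. q x * (f x - h x)\<^sup>2)"
    by (rule KY_qm_gen_nonneg[OF y]) simp
  then have on_h: "0 \<le> y q * (y f - y h)\<^sup>2"
    using A by (simp add: y_hom closed)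
  have "(\<lambda>x. (f x - g x) * (f x - h x)) = (\<lambda>_. 0)"
    using f by auto
  moreover have "y (\<lambda>x. (f x - g x) * (f x - h x)) = (y f - y g) * (y f - y h)"
    using A by (simp add: y_hom closed)
  ultimately have branch: "(y f - y g) * (y f - y h) = 0"
    by (simp add: y_hom)
  show "approximable (insert f B) y"
  proof (rule approximable_insert_piecewise[OF good g h q f yB])
    show "y f = y g" if "0 < y q"
      using on_g that by (simp add: mult_le_0_iff)
    show "y f = y h" if "y q < 0"
      using on_h that by (simp add: zero_le_mult_iff)
    assume "y q = 0"
    then have "y g = y h"
      using agree[OF yB] q g h by simp
    then show "approximable (insert f B) y"
      using good_imp_approximable[OF good yB] branch g h
      by (intro approximable_insert_pointwise[where G = "{g, h}"]) (auto simp: f)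
  qed
qed blast

lemma good_adjoin_indicator:
  assumes B: "is_subalgebra B" and Q: "is_quadmod B Q" and good: "good B Q"
    and q: "q \<in> B" and f: "f = (\<lambda>x. if q x \<ge> 0 then 1 else 0)"
    and boundary: "{y \<in> KY B Q. y q = 0} \<subseteq>
          Ytop B closure_of {y \<in> KY B Q. y q > 0} \<inter> Ytop B closure_of {y \<in> KY B Q. y q < 0}"
  shows "good (adjoin B f) (qm_gen (adjoin B f) (Q \<union> {\<lambda>x. q x * f x, \<lambda>x. q x * (f x - 1)}))"
proof (rule good_adjoinI[OF B Q good])
  have A: "f \<in> adjoin B f" "q \<in> adjoin B f"
    using q in_adjoin subset_adjoin[of B f] by auto
  note closed = subalgebra_closed[OF adjoin_subalgebra]
  show "Q \<union> {\<lambda>x. q x * f x, \<lambda>x. q x * (f x - 1)} \<subseteq> adjoin B f"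
    using Q subset_adjoin A by (fastforce simp: is_quadmod_def closed)
  show "0 \<le> p x" if "p \<in> Q \<union> {\<lambda>x. q x * f x, \<lambda>x. q x * (f x - 1)}" for p x
    using that good_nonneg[OF good] f by auto
  fix y assume y: "y \<in> KY (adjoin B f) (qm_gen (adjoin B f) (Q \<union> {\<lambda>x. q x * f x, \<lambda>x. q x * (f x - 1)}))"
    and yB: "restrict y B \<in> KY B Q"
  have yA: "y \<in> Ychar (adjoin B f)"
    using y by (simp add: KY_def)
  note y_hom = Ychar_mult[OF yA] Ychar_diff[OF adjoin_subalgebra yA] Ychar_const[OF adjoin_subalgebra yA]
  have "0 \<le> y (\<lambda>x. q x * f x)"
    by (rule KY_qm_gen_nonneg[OF y]) simp
  then have on_1: "0 \<le> y q * y f"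
    using A by (simp add: y_hom closed)
  have "0 \<le> y (\<lambda>x. q x * (f x - 1))"
    by (rule KY_qm_gen_nonneg[OF y]) simp
  then have on_0: "0 \<le> y q * (y f - 1)"
    using A by (simp add: y_hom closed)
  have "(\<lambda>x. f x * f x) = f"
    using f by auto
  then have "y f * y f = y f"
    using y_hom(1)[OF A(1) A(1)] by simp
  then have idempotent: "y f = 0 \<or> y f = 1"
    by (metis mult_cancel_right1 mult_zero_left)
  have one: "(\<lambda>_. 1) \<in> B" "(\<lambda>_. 0) \<in> B"
    using B by (simp_all add: subalgebra_const)
  show "approximable (insert f B) y"
  proof (rule approximable_insert_piecewise[where g = "\<lambda>_. 1" and h = "\<lambda>_. 0", OF good one q f yB])
    show "y f = y (\<lambda>_. 1)" if "0 < y q"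
      using on_0 that idempotent by (auto simp: y_hom zero_le_mult_iff)
    show "y f = y (\<lambda>_. 0)" if "y q < 0"
      using on_1 that idempotent by (auto simp: y_hom zero_le_mult_iff)
    assume "y q = 0"
    then have "restrict y B \<in> {w \<in> KY B Q. w q = 0}"
      using yB q by simp
    then have "restrict y B \<in>
        Ytop B closure_of {w \<in> KY B Q. w q > 0} \<inter> Ytop B closure_of {w \<in> KY B Q. w q < 0}"
      by (rule subsetD[OF boundary])
    then have "approximable_on B {x. 0 < q x} y" "approximable_on B {x. q x < 0} y"
      using good_approximable_on_preimage[OF good q open_greaterThan[of 0], of "restrict y B"]
        good_approximable_on_preimage[OF good q open_lessThan[of 0], of "restrict y B"]
      by simp_all
    with idempotent show "approximable (insert f B) y"
      using one
      by (auto intro: approximable_insert_pointwise[where G = "{\<lambda>_. 1}"]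
          approximable_insert_pointwise[where G = "{\<lambda>_. 0}"] simp: f y_hom)
  qed
qed blast

theorem proposition3p3:
  fixes B Q :: "('a \<Rightarrow> real) set" and f :: "'a \<Rightarrow> real"
  assumes "is_subalgebra B"
    and "is_quadmod B Q"
    and "good B Q"
  shows
   "(\<forall>r g. odd r \<and> g \<in> B \<and> f = (\<lambda>x. root r (g x))
        \<longrightarrow> good (adjoin B f) (qm_gen (adjoin B f) Q)) \<and>
    (\<forall>s g. even s \<and> s > 0 \<and> g \<in> B \<and> (\<forall>x. g x \<ge> 0) \<and> f = (\<lambda>x. root s (g x))
        \<longrightarrow> good (adjoin B f) (qm_gen (adjoin B f) (Q \<union> {f}))) \<and>
    (\<forall>g. g \<in> B \<and> (\<forall>x. g x \<noteq> 0) \<and> f = (\<lambda>x. 1 / g x)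
        \<longrightarrow> good (adjoin B f) (qm_gen (adjoin B f) Q)) \<and>
    (\<forall>g h q. g \<in> B \<and> h \<in> B \<and> q \<in> B \<and>
        f = (\<lambda>x. if q x \<ge> 0 then g x else h x) \<and>
        (\<forall>y\<in>KY B Q. y q = 0 \<longrightarrow> y g = y h)
        \<longrightarrow> good (adjoin B f) (qm_gen (adjoin B f)
              (Q \<union> {\<lambda>x. - (q x * (f x - g x)\<^sup>2), \<lambda>x. q x * (f x - h x)\<^sup>2}))) \<and>
    (\<forall>q. q \<in> B \<and> f = (\<lambda>x. if q x \<ge> 0 then 1 else 0) \<and>
        {y \<in> KY B Q. y q = 0} \<subseteq>
          (Ytop B) closure_of {y \<in> KY B Q. y q > 0} \<inter> (Ytop B) closure_of {y \<in> KY B Q. y q < 0}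
        \<longrightarrow> good (adjoin B f) (qm_gen (adjoin B f)
              (Q \<union> {\<lambda>x. q x * f x, \<lambda>x. q x * (f x - 1)})))"
proof (intro conjI allI impI; elim conjE)
  fix r g assume "odd r" "g \<in> B" "f = (\<lambda>x. root r (g x))"
  then show "good (adjoin B f) (qm_gen (adjoin B f) Q)"
    by (rule good_adjoin_odd_root[OF assms])
next
  fix s g assume "s > 0" "g \<in> B" "\<forall>x. g x \<ge> 0" "f = (\<lambda>x. root s (g x))"
  then show "good (adjoin B f) (qm_gen (adjoin B f) (Q \<union> {f}))"
    by (intro good_adjoin_even_root[OF assms]) auto
next
  fix g assume "g \<in> B" "\<forall>x. g x \<noteq> 0" "f = (\<lambda>x. 1 / g x)"
  then show "good (adjoin B f) (qm_gen (adjoin B f) Q)"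
    by (intro good_adjoin_inverse[OF assms]) auto
next
  fix g h q assume "g \<in> B" "h \<in> B" "q \<in> B" "f = (\<lambda>x. if q x \<ge> 0 then g x else h x)"
    "\<forall>y\<in>KY B Q. y q = 0 \<longrightarrow> y g = y h"
  then show "good (adjoin B f) (qm_gen (adjoin B f)
      (Q \<union> {\<lambda>x. - (q x * (f x - g x)\<^sup>2), \<lambda>x. q x * (f x - h x)\<^sup>2}))"
    by (intro good_adjoin_piecewise[OF assms]) auto
next
  fix q assume "q \<in> B" "f = (\<lambda>x. if q x \<ge> 0 then 1 else 0)"
    "{y \<in> KY B Q. y q = 0} \<subseteq>
       (Ytop B) closure_of {y \<in> KY B Q. y q > 0} \<inter> (Ytop B) closure_of {y \<in> KY B Q. y q < 0}"
  then show "good (adjoin B f) (qm_gen (adjoin B f) (Q \<union> {\<lambda>x. q x * f x, \<lambda>x. q x * (f x - 1)}))"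
    by (rule good_adjoin_indicator[OF assms])
qed

end
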